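(* Let $f_1,\dots,f_n:\mathbb{R}^p\to\mathbb{R}$ be continuously differentiable, let $g=\frac1n\sum_if_i\in\mathcal S(m,L)$ with $m>0$ and minimizer $x^*$, and let $i_k$ be sampled IID uniformly from $\{1,\dots,n\}$. Consider Finito with stepsize $\alpha$ initialized from arbitrary $x_i^0,y_i^0\in\mathbb{R}^p$, and define $v^k=\frac1n\sum_{i=1}^nx_i^k-\alpha\sum_{i=1}^ny_i^k$. 1. If every $f_i\in\mathcal F(m,L)$ and $n\ge\sqrt{50L/m}$, then Finito with $\alpha=\frac1{5L}$ satisfies $\mathbb{E}\left[\frac m{10L}\sum_i\|x_i^k-x^*\|^2+\|v^k-x^*\|^2\right]\le\left(1-\min\left\{\frac1{2n},\frac m{20L}\right\}\right)^kR^0$, where $R^0=\frac m{10L}\sum_i\|x_i^0-x^*\|^2+\frac1{5L^2}\sum_i\|y_i^0-\nabla f_i(x^* )\|^2+\|v^0-x^*\|^2$. 2. If every $f_i\in\mathcal F(0,L)$ and $n\ge\sqrt{64L/m}$, then Finito with $\alpha=\frac1{8L}$ satisfies $\mathbb{E}\left[\frac m{16L}\sum_i\|x_i^k-x^*\|^2+\|v^k-x^*\|^2\right]\le\left(1-\min\left\{\frac1{3n},\frac{5m}{176L}\right\}\right)^kR^0$, where $R^0=\frac m{16L}\sum_i\|x_i^0-x^*\|^2+\frac1{16L^2}\sum_i\|y_i^0-\nabla f_i(x^* )\|^2+\|v^0-x^*\|^2$. 3. If every $f_i$ is $L$-smooth and $n\ge\frac{48L^2}{m^2}$, then Finito with $\alpha=\frac1{2nm}$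 satisfies $\mathbb{E}\left[\frac3{8n}\sum_i\|x_i^k-x^*\|^2+\|v^k-x^*\|^2\right]\le\left(1-\frac1{3n}\right)^kR^0$, where $R^0=\frac3{8n}\sum_i\|x_i^0-x^*\|^2+\frac1{n^2m^2}\sum_i\|y_i^0-\nabla f_i(x^* )\|^2+\|v^0-x^*\|^2$.
   Context: A continuously differentiable $f:\mathbb{R}^p\to\mathbb{R}$ is $L$-smooth if $\|\nabla f(x)-\nabla f(y)\|\le L\|x-y\|$; $\mathcal F(m,L)$ denotes the continuously differentiable, $L$-smooth, $m$-strongly convex functions; $\mathcal F(0,L)$ the convex $L$-smooth ones. $\mathcal S(m,L)$ is the set of continuously differentiable $g$ with a unique $x^*$ such that $\nabla g(x^* )=0$ and, for all $x$, $\begin{bmatrix}x-x^*\\\nabla g(x)\end{bmatrix}^T\begin{bmatrix}-2mLI_p&(L+m)I_p\\(L+m)I_p&-2I_p\end{bmatrix}\begin{bmatrix}x-x^*\\\nabla g(x)\end{bmatrix}\ge0$. Finito: at step $k$, $x_i^{k+1}=\frac1n\sum_{j=1}^nx_j^k-\alpha\sum_{j=1}^ny_j^k$ if $i=i_k$ and $x_i^{k+1}=x_i^k$ otherwise; then $y_i^{k+1}=\nabla f_i(x_i^{k+1})$ if $i=i_k$ and $y_i^{k+1}=y_i^k$ otherwise. Expectation is over the random indices. *)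

theory Defs
  imports "HOL-Analysis.Analysis"
begin

definition C1_grad :: "('a::euclidean_space \<Rightarrow> real) \<Rightarrow> ('a \<Rightarrow> 'a) \<Rightarrow> bool" where
  "C1_grad f G \<longleftrightarrow> (\<forall>x. GDERIV f x :> G x) \<and> continuous_on UNIV G"

definition L_smooth :: "real \<Rightarrow> ('a::euclidean_space \<Rightarrow> real) \<Rightarrow> ('a \<Rightarrow> 'a) \<Rightarrow> bool" where
  "L_smooth L f G \<longleftrightarrow> C1_grad f G \<and> (\<forall>x y. norm (G x - G y) \<le> L * norm (x - y))"

definition strongly_convex :: "real \<Rightarrow> ('a::euclidean_space \<Rightarrow> real) \<Rightarrow> bool" where
  "strongly_convex m f \<longleftrightarrow> convex_on UNIV (\<lambda>x. f x - (m / 2) * (norm x)\<^sup>2)"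

definition in_F :: "real \<Rightarrow> real \<Rightarrow> ('a::euclidean_space \<Rightarrow> real) \<Rightarrow> ('a \<Rightarrow> 'a) \<Rightarrow> bool" where
  "in_F m L f G \<longleftrightarrow> L_smooth L f G \<and> strongly_convex m f"

text \<open>Membership in S(m,L); the quadratic form of the block matrix written out.\<close>
definition in_S :: "real \<Rightarrow> real \<Rightarrow> ('a::euclidean_space \<Rightarrow> real) \<Rightarrow> ('a \<Rightarrow> 'a) \<Rightarrow> bool" where
  "in_S m L g G \<longleftrightarrow> C1_grad g G \<and>
     (\<exists>!xs. G xs = 0 \<and>
        (\<forall>x. - 2 * m * L * (norm (x - xs))\<^sup>2 + 2 * (L + m) * inner (x - xs) (G x)
              - 2 * (norm (G x))\<^sup>2 \<ge> 0))"

text \<open>One Finito step with selected index i (indices 0..n-1).\<close>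
definition finito_step :: "nat \<Rightarrow> real \<Rightarrow> (nat \<Rightarrow> 'a \<Rightarrow> 'a::euclidean_space)
    \<Rightarrow> (nat \<Rightarrow> 'a) \<times> (nat \<Rightarrow> 'a) \<Rightarrow> nat \<Rightarrow> (nat \<Rightarrow> 'a) \<times> (nat \<Rightarrow> 'a)" where
  "finito_step n \<alpha> G st i =
     (let x = fst st; y = snd st;
          v = (1 / real n) *\<^sub>R (\<Sum>j<n. x j) - \<alpha> *\<^sub>R (\<Sum>j<n. y j)
      in (x(i := v), y(i := G i v)))"

definition finito_run :: "nat \<Rightarrow> real \<Rightarrow> (nat \<Rightarrow> 'a \<Rightarrow> 'a::euclidean_space)
    \<Rightarrow> (nat \<Rightarrow> 'a) \<Rightarrow> (nat \<Rightarrow> 'a) \<Rightarrow> nat list \<Rightarrow> (nat \<Rightarrow> 'a) \<times> (nat \<Rightarrow> 'a)" where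
  "finito_run n \<alpha> G x0 y0 is = foldl (finito_step n \<alpha> G) (x0, y0) is"

definition vbar :: "nat \<Rightarrow> real \<Rightarrow> (nat \<Rightarrow> 'a::euclidean_space) \<times> (nat \<Rightarrow> 'a) \<Rightarrow> 'a" where
  "vbar n \<alpha> st = (1 / real n) *\<^sub>R (\<Sum>j<n. fst st j) - \<alpha> *\<^sub>R (\<Sum>j<n. snd st j)"

text \<open>Expectation at iteration k of a function Phi of the state, with i_0,...,i_(k-1)
  IID uniform on {0..n-1}: the uniform average over all n^k index sequences.\<close>
definition finito_E :: "nat \<Rightarrow> real \<Rightarrow> (nat \<Rightarrow> 'a \<Rightarrow> 'a::euclidean_space)
    \<Rightarrow> (nat \<Rightarrow> 'a) \<Rightarrow> (nat \<Rightarrow> 'a) \<Rightarrow> nat \<Rightarrow> ((nat \<Rightarrow> 'a) \<times> (nat \<Rightarrow> 'a) \<Rightarrow> real) \<Rightarrow> real" where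
  "finito_E n \<alpha> G x0 y0 k Phi =
     (\<Sum>is\<in>{is. set is \<subseteq> {..<n} \<and> length is = k}. Phi (finito_run n \<alpha> G x0 y0 is)) / real n ^ k"

end

theory Submission
  imports Defs
begin

text \<open>In each of the three regimes the Lyapunov function
  \<open>V = c \<Sum>\<^sub>i \<parallel>x\<^sub>i - x\<^sup>*\<parallel>\<^sup>2 + d \<Sum>\<^sub>i \<parallel>y\<^sub>i - \<nabla>f\<^sub>i(x\<^sup>*)\<parallel>\<^sup>2 + \<parallel>v - x\<^sup>*\<parallel>\<^sup>2\<close> contracts by the factor \<open>\<rho>\<close> in
  expectation over one uniformly sampled index; since the expectation over IID indices is the uniform
  average over index sequences, this iterates to \<open>\<rho>\<^sup>k\<close>. A step overwrites one pair \<open>(x\<^sub>i, y\<^sub>i)\<close> by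
  \<open>(v, \<nabla>f\<^sub>i(v))\<close>, so on average the first two sums lose a \<open>1/n\<close> fraction. The new \<open>v\<close> has mean
  \<open>v - \<alpha> \<nabla>g(v)\<close>, which contracts towards \<open>x\<^sup>*\<close> because \<open>g \<in> \<S>(m, L)\<close> makes \<open>\<nabla>g\<close> strongly
  monotone at \<open>x\<^sup>*\<close>; its variance is controlled by Young's inequality together with the interpolation
  inequality of \<open>\<F>(m, L)\<close>, the co-coercivity of \<open>\<F>(0, L)\<close>, or mere Lipschitz continuity (with the
  small step \<open>1/(2nm)\<close>) respectively.\<close>

section \<open>Smooth convex functions\<close>

lemma GDERIV_line_has_real_derivative:
  fixes f :: "'a::euclidean_space \<Rightarrow> real"
  assumes "\<forall>z. GDERIV f z :> G z"
  shows "((\<lambda>t. f (x + t *\<^sub>R d)) has_real_derivative inner (G (x + t *\<^sub>R d)) d) (at t)"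
proof -
  have line: "((\<lambda>t. x + t *\<^sub>R d) has_derivative (\<lambda>h. h *\<^sub>R d)) (at t)"
    by (auto intro!: derivative_eq_intros)
  have "(f has_derivative (\<lambda>h. inner h (G (x + t *\<^sub>R d)))) (at (x + t *\<^sub>R d))"
    using assms unfolding gderiv_def by blast
  from has_derivative_compose[OF line this]
  have "((\<lambda>t. f (x + t *\<^sub>R d)) has_derivative (\<lambda>h. inner (h *\<^sub>R d) (G (x + t *\<^sub>R d)))) (at t)"
    by (simp add: o_def)
  then show ?thesis unfolding has_field_derivative_def
    by (rule has_derivative_subst) (auto simp: inner_commute)
qed

lemma Lipschitz_gradient_quadratic_upper_bound:
  fixes f :: "'a::euclidean_space \<Rightarrow> real"
  assumes D: "\<forall>z. GDERIV f z :> G z" and Lip: "\<forall>x y. norm (G x - G y) \<le> L * norm (x - y)"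
  shows "f y \<le> f x + inner (G x) (y - x) + L / 2 * (norm (y - x))\<^sup>2"
proof -
  define d where "d = y - x"
  define \<psi> where "\<psi> t = f (x + t *\<^sub>R d) - t * inner (G x) d - L / 2 * t\<^sup>2 * (norm d)\<^sup>2" for t
  have "\<psi> 1 \<le> \<psi> 0"
  proof (rule DERIV_nonpos_imp_nonincreasing[of 0 1])
    fix t :: real assume t: "0 \<le> t" "t \<le> 1"
    have der: "(\<psi> has_real_derivative
        inner (G (x + t *\<^sub>R d)) d - inner (G x) d - L / 2 * (2 * t) * (norm d)\<^sup>2) (at t)"
      unfolding \<psi>_def
      by (rule derivative_eq_intros GDERIV_line_has_real_derivative[OF D] refl | simp)+
    have "inner (G (x + t *\<^sub>R d)) d - inner (G x) d = inner (G (x + t *\<^sub>R d) - G x) d"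
      by (simp add: inner_diff_left)
    also have "\<dots> \<le> norm (G (x + t *\<^sub>R d) - G x) * norm d" by (rule norm_cauchy_schwarz)
    also have "\<dots> \<le> L * norm (t *\<^sub>R d) * norm d"
      using Lip[rule_format, of "x + t *\<^sub>R d" x] by (simp add: mult_right_mono)
    also have "\<dots> = L / 2 * (2 * t) * (norm d)\<^sup>2" using t by (simp add: power2_eq_square)
    finally show "\<exists>y. (\<psi> has_real_derivative y) (at t) \<and> y \<le> 0" using der by auto
  qed simp
  then show ?thesis unfolding \<psi>_def d_def by (simp add: algebra_simps)
qed

lemma convex_on_GDERIV_above_tangent:
  fixes h :: "'a::euclidean_space \<Rightarrow> real"
  assumes cv: "convex_on UNIV h" and D: "\<forall>z. GDERIV h z :> H z"
  shows "h x + inner (H x) (y - x) \<le> h y"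
proof -
  define d where "d = y - x"
  define \<phi> where "\<phi> t = h (x + t *\<^sub>R d)" for t
  have "convex_on UNIV \<phi>"
  proof (rule convex_onI)
    fix t a b :: real assume t: "0 < t" "t < 1"
    have "x + ((1 - t) *\<^sub>R a + t *\<^sub>R b) *\<^sub>R d = (1 - t) *\<^sub>R (x + a *\<^sub>R d) + t *\<^sub>R (x + b *\<^sub>R d)"
      by (simp add: algebra_simps)
    then show "\<phi> ((1 - t) *\<^sub>R a + t *\<^sub>R b) \<le> (1 - t) * \<phi> a + t * \<phi> b"
      unfolding \<phi>_def using convex_onD[OF cv, of t] t by simp
  qed simp
  moreover have "(\<phi> has_real_derivative inner (H x) d) (at 0 within UNIV)"
    unfolding \<phi>_def using GDERIV_line_has_real_derivative[OF D, of x d 0] by simp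
  ultimately have "\<phi> 1 - \<phi> 0 \<ge> inner (H x) d * (1 - 0)"
    by (intro convex_on_imp_above_tangent) auto
  then show ?thesis unfolding \<phi>_def d_def by simp
qed

text \<open>Compare \<open>h\<close> at the gradient step \<open>y - s (H y - H x)\<close> with the tangent at \<open>x\<close> from below
  and with the quadratic bound at \<open>y\<close> from above.\<close>
lemma convex_Bregman_ge_gradient_gap:
  fixes h :: "'a::euclidean_space \<Rightarrow> real"
  assumes cv: "convex_on UNIV h" and D: "\<forall>z. GDERIV h z :> H z"
    and upper: "\<forall>x y. h y \<le> h x + inner (H x) (y - x) + M / 2 * (norm (y - x))\<^sup>2"
  shows "s * (1 - M * s / 2) * (norm (H y - H x))\<^sup>2 \<le> h y - h x - inner (H x) (y - x)"
proof -
  define \<delta> where "\<delta> = H y - H x"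
  define z where "z = y - s *\<^sub>R \<delta>"
  have below: "h x + inner (H x) (z - x) \<le> h z" by (rule convex_on_GDERIV_above_tangent[OF cv D])
  have above: "h z \<le> h y + inner (H y) (z - y) + M / 2 * (norm (z - y))\<^sup>2" using upper by blast
  have zx: "z - x = (y - x) - s *\<^sub>R \<delta>" and zy: "z - y = - (s *\<^sub>R \<delta>)"
    unfolding z_def by auto
  have "inner (H y) \<delta> - inner (H x) \<delta> = (norm \<delta>)\<^sup>2"
    unfolding \<delta>_def by (simp add: inner_diff_left power2_norm_eq_inner)
  then show ?thesis using below above unfolding zx zy \<delta>_def[symmetric]
    by (simp add: inner_diff_right power2_eq_square algebra_simps)
qed

lemma convex_gradient_cocoercive:
  fixes h :: "'a::euclidean_space \<Rightarrow> real"
  assumes cv: "convex_on UNIV h" and D: "\<forall>z. GDERIV h z :> H z"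
    and upper: "\<forall>x y. h y \<le> h x + inner (H x) (y - x) + M / 2 * (norm (y - x))\<^sup>2"
    and M: "0 \<le> M"
  shows "(norm (H y - H x))\<^sup>2 \<le> M * inner (H y - H x) (y - x)"
proof -
  let ?N = "(norm (H y - H x))\<^sup>2" and ?I = "inner (H y - H x) (y - x)"
  have gap: "s * (2 - M * s) * ?N \<le> ?I" for s
  proof -
    have "inner (H y - H x) (y - x) = - inner (H x) (y - x) - inner (H y) (x - y)"
      by (simp add: inner_diff algebra_simps inner_commute)
    then show ?thesis
      using convex_Bregman_ge_gradient_gap[OF cv D upper, of s y x]
        convex_Bregman_ge_gradient_gap[OF cv D upper, of s x y]
      by (simp add: norm_minus_commute algebra_simps)
  qed
  show ?thesis
  proof (cases "M = 0")
    case True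
    have "?N = 0"
    proof (rule ccontr)
      assume "?N \<noteq> 0"
      then have "2 * (\<bar>?I\<bar> + 1) \<le> ?I"
        using gap[of "(\<bar>?I\<bar> + 1) / ?N"] True by simp
      then show False by (smt (verit))
    qed
    then show ?thesis by simp
  next
    case False
    then show ?thesis using gap[of "1 / M"] M by (simp add: field_simps)
  qed
qed

text \<open>Co-coercivity of the gradient of the convex, \<open>(L - m)\<close>-smooth function \<open>f - m/2 \<parallel>\<cdot>\<parallel>\<^sup>2\<close>,
  rewritten in terms of \<open>G\<close>.\<close>
lemma in_F_interpolation:
  fixes f :: "'a::euclidean_space \<Rightarrow> real"
  assumes F: "in_F m L f G" and m: "0 \<le> m" "m \<le> L"
  shows "(norm (G x - G y))\<^sup>2 \<le> (L + m) * inner (G x - G y) (x - y) - m * L * (norm (x - y))\<^sup>2"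
proof -
  define h where "h z = f z - (m / 2) * (norm z)\<^sup>2" for z
  define H where "H z = G z - m *\<^sub>R z" for z
  have Df: "\<forall>z. GDERIV f z :> G z" and Lip: "\<forall>x y. norm (G x - G y) \<le> L * norm (x - y)"
    and cv: "convex_on UNIV h"
    using F unfolding in_F_def L_smooth_def C1_grad_def strongly_convex_def h_def by auto
  have Dh: "\<forall>z. GDERIV h z :> H z"
  proof
    fix z
    have "GDERIV (\<lambda>w::'a. m / 2 * (norm w)\<^sup>2) z :> m *\<^sub>R z"
      unfolding gderiv_def power2_norm_eq_inner
      by (rule derivative_eq_intros refl | simp add: inner_commute algebra_simps)+
    from GDERIV_diff[OF spec[OF Df] this] show "GDERIV h z :> H z"
      unfolding h_def H_def .
  qed
  have upper: "\<forall>a b. h b \<le> h a + inner (H a) (b - a) + (L - m) / 2 * (norm (b - a))\<^sup>2"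
  proof (intro allI)
    fix a b :: 'a
    have "(norm b)\<^sup>2 - (norm a)\<^sup>2 - 2 * inner a (b - a) = (norm (b - a))\<^sup>2"
      by (simp add: power2_norm_eq_inner inner_diff algebra_simps inner_commute)
    moreover have "h b - h a - inner (H a) (b - a) = f b - f a - inner (G a) (b - a)
        - m / 2 * ((norm b)\<^sup>2 - (norm a)\<^sup>2 - 2 * inner a (b - a))"
      unfolding h_def H_def by (simp add: inner_diff_left algebra_simps)
    ultimately show "h b \<le> h a + inner (H a) (b - a) + (L - m) / 2 * (norm (b - a))\<^sup>2"
      using Lipschitz_gradient_quadratic_upper_bound[OF Df Lip, of b a]
      by (simp add: algebra_simps diff_divide_distrib)
  qed
  have "(norm (H x - H y))\<^sup>2 \<le> (L - m) * inner (H x - H y) (x - y)"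
    using convex_gradient_cocoercive[OF cv Dh upper, of x y] m by simp
  moreover have "H x - H y = (G x - G y) - m *\<^sub>R (x - y)" unfolding H_def by (simp add: algebra_simps)
  ultimately show ?thesis
    unfolding power2_norm_eq_inner
    by (simp add: inner_diff inner_commute algebra_simps power2_eq_square)
qed

section \<open>Sums of squared norms\<close>

lemma sum_norm_power2_add:
  fixes p :: "nat \<Rightarrow> 'a::real_inner"
  shows "(\<Sum>i\<in>A. (norm (p i + w))\<^sup>2)
    = (\<Sum>i\<in>A. (norm (p i))\<^sup>2) + 2 * inner (\<Sum>i\<in>A. p i) w + real (card A) * (norm w)\<^sup>2"
proof -
  have "(norm (p i + w))\<^sup>2 = (norm (p i))\<^sup>2 + 2 * inner (p i) w + (norm w)\<^sup>2" for i
    unfolding power2_norm_eq_inner by (simp add: inner_add inner_commute)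
  then show ?thesis by (simp add: sum.distrib inner_sum_left sum_distrib_left)
qed

lemma sum_norm_power2_centered:
  fixes p :: "nat \<Rightarrow> 'a::real_inner"
  assumes "(\<Sum>i<n. p i) = real n *\<^sub>R \<mu>"
  shows "(\<Sum>i<n. (norm (p i))\<^sup>2) = (\<Sum>i<n. (norm (p i - \<mu>))\<^sup>2) + real n * (norm \<mu>)\<^sup>2"
  using sum_norm_power2_add[of "\<lambda>i. p i - \<mu>" \<mu> "{..<n}"] assms
  by (simp add: sum_subtractf sum_constant_scaleR power2_norm_eq_inner)

lemma power2_norm_add_le_Young:
  fixes p q :: "'a::real_inner"
  assumes t: "0 < t"
  shows "(norm (p + q))\<^sup>2 \<le> (1 + t) * (norm p)\<^sup>2 + (1 + 1 / t) * (norm q)\<^sup>2"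
proof -
  have "0 \<le> (norm (t *\<^sub>R p - q))\<^sup>2 / t" using t by simp
  also have "\<dots> = t * (norm p)\<^sup>2 - 2 * inner p q + (norm q)\<^sup>2 / t"
    unfolding power2_norm_eq_inner using t
    by (simp add: inner_diff inner_commute field_simps power2_eq_square)
  finally show ?thesis
    unfolding power2_norm_eq_inner by (simp add: inner_add inner_commute algebra_simps)
qed

lemma sum_norm_power2_add_le_Young:
  fixes p q :: "nat \<Rightarrow> 'a::real_inner"
  assumes "0 < t"
  shows "(\<Sum>i\<in>A. (norm (p i + q i))\<^sup>2)
    \<le> (1 + t) * (\<Sum>i\<in>A. (norm (p i))\<^sup>2) + (1 + 1 / t) * (\<Sum>i\<in>A. (norm (q i))\<^sup>2)"
proof -
  have "(\<Sum>i\<in>A. (norm (p i + q i))\<^sup>2)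
      \<le> (\<Sum>i\<in>A. (1 + t) * (norm (p i))\<^sup>2 + (1 + 1 / t) * (norm (q i))\<^sup>2)"
    by (rule sum_mono) (rule power2_norm_add_le_Young[OF assms])
  then show ?thesis by (simp add: sum.distrib sum_distrib_left)
qed

text \<open>The vectors \<open>e + (e - a\<^sub>i)/N - \<alpha> (g\<^sub>i - b\<^sub>i)\<close> are the possible new points \<open>v\<^sup>k\<^sup>+\<^sup>1 - x\<^sup>*\<close> of
  Finito. Their second moment splits into the squared mean \<open>\<parallel>e - \<alpha> \<gamma>\<parallel>\<^sup>2\<close> and a variance, which two
  Young inequalities bound by the spreads of \<open>a\<close>, \<open>b\<close> and \<open>g\<close>.\<close>
lemma second_moment_update_le:
  fixes a b g :: "nat \<Rightarrow> 'a::real_inner" and \<alpha> :: real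
  assumes n: "0 < n" and t: "0 < t" and s: "0 < s"
  defines "N \<equiv> real n"
  defines "e \<equiv> (1 / N) *\<^sub>R (\<Sum>i<n. a i) - \<alpha> *\<^sub>R (\<Sum>i<n. b i)"
  defines "\<gamma> \<equiv> (1 / N) *\<^sub>R (\<Sum>i<n. g i)"
  shows "(1 / N) * (\<Sum>i<n. (norm (e + (1 / N) *\<^sub>R (e - a i) - \<alpha> *\<^sub>R (g i - b i)))\<^sup>2)
    \<le> (norm (e - \<alpha> *\<^sub>R \<gamma>))\<^sup>2
       + (1 + t) / N * ((1 + s) / N\<^sup>2 * (\<Sum>i<n. (norm (a i))\<^sup>2) + (1 + 1 / s) * \<alpha>\<^sup>2 * (\<Sum>i<n. (norm (b i))\<^sup>2))
       + (1 + 1 / t) * \<alpha>\<^sup>2 * ((1 / N) * (\<Sum>i<n. (norm (g i))\<^sup>2) - (norm \<gamma>)\<^sup>2)"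
proof -
  have N: "N > 0" using n unfolding N_def by simp
  define z where "z i = \<alpha> *\<^sub>R b i - (1 / N) *\<^sub>R a i" for i
  define u where "u i = z i + (1 / N) *\<^sub>R e" for i
  have Sz: "(\<Sum>i<n. z i) = N *\<^sub>R (- (1 / N) *\<^sub>R e)"
    unfolding z_def e_def using N by (simp add: sum_subtractf scaleR_sum_right)
  have Sg: "(\<Sum>i<n. g i) = N *\<^sub>R \<gamma>" unfolding \<gamma>_def using N by simp
  have Sw: "(\<Sum>i<n. e + (1 / N) *\<^sub>R (e - a i) - \<alpha> *\<^sub>R (g i - b i)) = N *\<^sub>R (e - \<alpha> *\<^sub>R \<gamma>)"
  proof -
    have "e + (1 / N) *\<^sub>R (e - a i) - \<alpha> *\<^sub>R (g i - b i) = (e + (1 / N) *\<^sub>R e) + z i - \<alpha> *\<^sub>R g i" for i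
      unfolding z_def by (simp add: algebra_simps)
    then show ?thesis
      using N by (simp add: sum.distrib sum_subtractf sum_constant_scaleR Sz Sg N_def algebra_simps
          flip: scaleR_sum_right)
  qed
  have dev: "e + (1 / N) *\<^sub>R (e - a i) - \<alpha> *\<^sub>R (g i - b i) - (e - \<alpha> *\<^sub>R \<gamma>) = u i + - (\<alpha> *\<^sub>R (g i - \<gamma>))" for i
    unfolding u_def z_def by (simp add: algebra_simps)
  define V where "V = (\<Sum>i<n. (norm (u i + - (\<alpha> *\<^sub>R (g i - \<gamma>))))\<^sup>2)"
  define B where "B = (1 + s) / N\<^sup>2 * (\<Sum>i<n. (norm (a i))\<^sup>2) + (1 + 1 / s) * \<alpha>\<^sup>2 * (\<Sum>i<n. (norm (b i))\<^sup>2)"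
  have Young: "V \<le> (1 + t) * (\<Sum>i<n. (norm (u i))\<^sup>2) + (1 + 1 / t) * (\<alpha>\<^sup>2 * (\<Sum>i<n. (norm (g i - \<gamma>))\<^sup>2))"
    using sum_norm_power2_add_le_Young[OF t, of u "\<lambda>i. - (\<alpha> *\<^sub>R (g i - \<gamma>))" "{..<n}"]
    unfolding V_def by (simp add: power_mult_distrib sum_distrib_left)
  have spread_g: "(\<Sum>i<n. (norm (g i - \<gamma>))\<^sup>2) = (\<Sum>i<n. (norm (g i))\<^sup>2) - N * (norm \<gamma>)\<^sup>2"
    using sum_norm_power2_centered[OF Sg[unfolded N_def]] by (simp add: N_def)
  have "(\<Sum>i<n. (norm (u i))\<^sup>2) \<le> (\<Sum>i<n. (norm (z i))\<^sup>2)"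
    using sum_norm_power2_centered[OF Sz[unfolded N_def]] unfolding u_def N_def by simp
  also have "(\<Sum>i<n. (norm (z i))\<^sup>2) \<le> B"
    using sum_norm_power2_add_le_Young[OF s, of "\<lambda>i. - ((1 / N) *\<^sub>R a i)" "\<lambda>i. \<alpha> *\<^sub>R b i" "{..<n}"]
    unfolding z_def B_def by (simp add: power_mult_distrib power_divide sum_distrib_left mult.assoc)
  finally have "(1 + t) * (\<Sum>i<n. (norm (u i))\<^sup>2) \<le> (1 + t) * B"
    using t by (intro mult_left_mono) auto
  then have V_le: "V \<le> (1 + t) * B + (1 + 1 / t) * \<alpha>\<^sup>2 * ((\<Sum>i<n. (norm (g i))\<^sup>2) - N * (norm \<gamma>)\<^sup>2)"
    using Young unfolding spread_g by (simp only: mult.assoc)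
  have "(\<Sum>i<n. (norm (e + (1 / N) *\<^sub>R (e - a i) - \<alpha> *\<^sub>R (g i - b i)))\<^sup>2)
      = V + N * (norm (e - \<alpha> *\<^sub>R \<gamma>))\<^sup>2"
    using sum_norm_power2_centered[OF Sw[unfolded N_def], folded N_def, unfolded dev]
    unfolding V_def by simp
  then have "(1 / N) * (\<Sum>i<n. (norm (e + (1 / N) *\<^sub>R (e - a i) - \<alpha> *\<^sub>R (g i - b i)))\<^sup>2)
      = (norm (e - \<alpha> *\<^sub>R \<gamma>))\<^sup>2 + V / N"
    using N by (simp add: field_simps)
  also have "\<dots> \<le> (norm (e - \<alpha> *\<^sub>R \<gamma>))\<^sup>2
      + ((1 + t) * B + (1 + 1 / t) * \<alpha>\<^sup>2 * ((\<Sum>i<n. (norm (g i))\<^sup>2) - N * (norm \<gamma>)\<^sup>2)) / N"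
    using V_le N by (simp add: divide_right_mono)
  also have "\<dots> = (norm (e - \<alpha> *\<^sub>R \<gamma>))\<^sup>2 + (1 + t) / N * B
      + (1 + 1 / t) * \<alpha>\<^sup>2 * ((1 / N) * (\<Sum>i<n. (norm (g i))\<^sup>2) - (norm \<gamma>)\<^sup>2)"
    using N by (simp add: field_simps)
  finally show ?thesis unfolding B_def .
qed

section \<open>One step of Finito in expectation\<close>

lemma finito_E_Suc:
  "finito_E n \<alpha> G x0 y0 (Suc k) Phi = (1 / real n) *
    (\<Sum>i<n. finito_E n \<alpha> G (fst (finito_step n \<alpha> G (x0, y0) i)) (snd (finito_step n \<alpha> G (x0, y0) i)) k Phi)"
proof -
  let ?S = "\<lambda>k. {is. set is \<subseteq> {..<n} \<and> length is = k}"
  let ?st = "\<lambda>i. finito_step n \<alpha> G (x0, y0) i"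
  have run: "finito_run n \<alpha> G x0 y0 (i # js) = finito_run n \<alpha> G (fst (?st i)) (snd (?st i)) js" for i js
    unfolding finito_run_def by simp
  have "(\<Sum>is\<in>?S (Suc k). Phi (finito_run n \<alpha> G x0 y0 is))
      = (\<Sum>p\<in>?S k \<times> {..<n}. Phi (finito_run n \<alpha> G x0 y0 ((\<lambda>(xs, i). i # xs) p)))"
    unfolding lists_length_Suc_eq by (subst sum.reindex[OF inj_split_Cons]) (simp add: o_def)
  also have "\<dots> = (\<Sum>js\<in>?S k. \<Sum>i<n. Phi (finito_run n \<alpha> G x0 y0 (i # js)))"
    unfolding sum.cartesian_product by (rule sum.cong) (auto split: prod.splits)
  also have "\<dots> = (\<Sum>i<n. \<Sum>js\<in>?S k. Phi (finito_run n \<alpha> G (fst (?st i)) (snd (?st i)) js))"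
    unfolding run by (rule sum.swap)
  finally show ?thesis unfolding finito_E_def
    by (simp add: sum_divide_distrib sum_distrib_left field_simps)
qed

lemma finito_E_le_geometric:
  fixes V Phi :: "(nat \<Rightarrow> 'a::euclidean_space) \<times> (nat \<Rightarrow> 'a) \<Rightarrow> real"
  assumes \<rho>: "0 \<le> \<rho>" and Phi_le: "\<forall>st. Phi st \<le> V st"
    and contraction: "\<forall>st. (1 / real n) * (\<Sum>i<n. V (finito_step n \<alpha> G st i)) \<le> \<rho> * V st"
  shows "finito_E n \<alpha> G x0 y0 k Phi \<le> \<rho> ^ k * V (x0, y0)"
proof (induction k arbitrary: x0 y0)
  case 0
  have "{is. set is \<subseteq> {..<n} \<and> length is = 0} = {[]}" by auto
  then show ?case using Phi_le unfolding finito_E_def finito_run_def by simp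
next
  case (Suc k)
  let ?st = "\<lambda>i. finito_step n \<alpha> G (x0, y0) i"
  have "finito_E n \<alpha> G x0 y0 (Suc k) Phi
      = (1 / real n) * (\<Sum>i<n. finito_E n \<alpha> G (fst (?st i)) (snd (?st i)) k Phi)"
    by (rule finito_E_Suc)
  also have "\<dots> \<le> (1 / real n) * (\<Sum>i<n. \<rho> ^ k * V (?st i))"
  proof -
    have "finito_E n \<alpha> G (fst (?st i)) (snd (?st i)) k Phi \<le> \<rho> ^ k * V (?st i)" for i
      using Suc.IH[of "fst (?st i)" "snd (?st i)"] by simp
    then show ?thesis by (intro mult_left_mono sum_mono) auto
  qed
  also have "\<dots> = \<rho> ^ k * ((1 / real n) * (\<Sum>i<n. V (?st i)))"
    by (simp add: sum_distrib_left)
  also have "\<dots> \<le> \<rho> ^ k * (\<rho> * V (x0, y0))"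
    using contraction \<rho> by (intro mult_left_mono) auto
  finally show ?case by (simp add: mult_ac)
qed

lemma sum_lessThan_fun_upd:
  fixes F :: "nat \<Rightarrow> 'b \<Rightarrow> 'c::ab_group_add"
  assumes "i < n"
  shows "(\<Sum>j<n. F j ((h(i := w)) j)) = (\<Sum>j<n. F j (h j)) - F i (h i) + F i w"
proof -
  have i: "i \<in> {..<n}" using assms by simp
  have "(\<Sum>j<n. F j ((h(i := w)) j)) = F i w + (\<Sum>j\<in>{..<n} - {i}. F j (h j))"
    by (simp add: sum.remove[OF _ i])
  moreover have "(\<Sum>j<n. F j (h j)) = F i (h i) + (\<Sum>j\<in>{..<n} - {i}. F j (h j))"
    by (simp add: sum.remove[OF _ i])
  ultimately show ?thesis by (simp add: algebra_simps)
qed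

lemma finito_step_vbar:
  "finito_step n \<alpha> G st i = ((fst st)(i := vbar n \<alpha> st), (snd st)(i := G i (vbar n \<alpha> st)))"
  unfolding finito_step_def vbar_def by (simp add: Let_def)

lemma vbar_finito_step:
  assumes "i < n"
  shows "vbar n \<alpha> (finito_step n \<alpha> G st i)
    = vbar n \<alpha> st + (1 / real n) *\<^sub>R (vbar n \<alpha> st - fst st i) - \<alpha> *\<^sub>R (G i (vbar n \<alpha> st) - snd st i)"
proof -
  define v where "v = vbar n \<alpha> st"
  have step: "finito_step n \<alpha> G st i = ((fst st)(i := v), (snd st)(i := G i v))"
    unfolding v_def by (rule finito_step_vbar)
  have sx: "(\<Sum>j<n. ((fst st)(i := v)) j) = (\<Sum>j<n. fst st j) - fst st i + v"
    and sy: "(\<Sum>j<n. ((snd st)(i := G i v)) j) = (\<Sum>j<n. snd st j) - snd st i + G i v"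
    using sum_lessThan_fun_upd[OF assms, of "\<lambda>j z. z"] by simp_all
  have "vbar n \<alpha> (finito_step n \<alpha> G st i) = ((1 / real n) *\<^sub>R (\<Sum>j<n. fst st j) - \<alpha> *\<^sub>R (\<Sum>j<n. snd st j))
      + (1 / real n) *\<^sub>R (v - fst st i) - \<alpha> *\<^sub>R (G i v - snd st i)"
    unfolding step vbar_def fst_conv snd_conv sx sy by (simp add: algebra_simps)
  then show ?thesis unfolding v_def vbar_def .
qed

definition grad_avg :: "nat \<Rightarrow> (nat \<Rightarrow> 'a \<Rightarrow> 'a::real_vector) \<Rightarrow> 'a \<Rightarrow> 'a" where
  "grad_avg n G x = (1 / real n) *\<^sub>R (\<Sum>i<n. G i x)"

definition finito_lyapunov :: "real \<Rightarrow> real \<Rightarrow> nat \<Rightarrow> real \<Rightarrow> (nat \<Rightarrow> 'a \<Rightarrow> 'a::euclidean_space)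
    \<Rightarrow> 'a \<Rightarrow> (nat \<Rightarrow> 'a) \<times> (nat \<Rightarrow> 'a) \<Rightarrow> real" where
  "finito_lyapunov c d n \<alpha> G xs st = c * (\<Sum>j<n. (norm (fst st j - xs))\<^sup>2)
     + d * (\<Sum>j<n. (norm (snd st j - G j xs))\<^sup>2) + (norm (vbar n \<alpha> st - xs))\<^sup>2"

text \<open>\<open>t\<close> and \<open>s\<close> are the parameters of the two Young inequalities of
  \<open>second_moment_update_le\<close>.\<close>
lemma finito_lyapunov_avg_step_le:
  fixes G :: "nat \<Rightarrow> 'a \<Rightarrow> 'a::euclidean_space" and x y :: "nat \<Rightarrow> 'a" and \<alpha> :: real
  assumes n: "0 < n" and G0: "(\<Sum>i<n. G i xs) = 0" and t: "0 < t" and s: "0 < s"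
  defines "N \<equiv> real n" and "v \<equiv> vbar n \<alpha> (x, y)"
  defines "X \<equiv> \<Sum>j<n. (norm (x j - xs))\<^sup>2" and "Y \<equiv> \<Sum>j<n. (norm (y j - G j xs))\<^sup>2"
  shows "(1 / N) * (\<Sum>i<n. finito_lyapunov c d n \<alpha> G xs (finito_step n \<alpha> G (x, y) i))
    \<le> (c * (1 - 1 / N) + (1 + t) * (1 + s) / N ^ 3) * X
      + (d * (1 - 1 / N) + (1 + t) * (1 + 1 / s) * \<alpha>\<^sup>2 / N) * Y
      + ((1 + c) * (norm (v - xs))\<^sup>2 - 2 * \<alpha> * inner (v - xs) (grad_avg n G v)
         + (d + (1 + 1 / t) * \<alpha>\<^sup>2) * ((1 / N) * (\<Sum>i<n. (norm (G i v - G i xs))\<^sup>2))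
         - \<alpha>\<^sup>2 / t * (norm (grad_avg n G v))\<^sup>2)"
proof -
  have N: "N > 0" using n unfolding N_def by simp
  define e where "e = v - xs"
  define \<gamma> where "\<gamma> = grad_avg n G v"
  define P where "P = (1 / N) * (\<Sum>i<n. (norm (G i v - G i xs))\<^sup>2)"
  define Q where "Q i = e + (1 / N) *\<^sub>R (e - (x i - xs)) - \<alpha> *\<^sub>R ((G i v - G i xs) - (y i - G i xs))" for i
  have step: "finito_lyapunov c d n \<alpha> G xs (finito_step n \<alpha> G (x, y) i)
      = c * (X - (norm (x i - xs))\<^sup>2 + (norm e)\<^sup>2)
        + d * (Y - (norm (y i - G i xs))\<^sup>2 + (norm (G i v - G i xs))\<^sup>2) + (norm (Q i))\<^sup>2"
    if i: "i < n" for i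
  proof -
    have "vbar n \<alpha> (finito_step n \<alpha> G (x, y) i) - xs = Q i"
      unfolding vbar_finito_step[OF i] Q_def e_def v_def N_def by (simp add: algebra_simps)
    then show ?thesis
      unfolding finito_lyapunov_def finito_step_vbar fst_conv snd_conv X_def Y_def
        sum_lessThan_fun_upd[OF i, of "\<lambda>j z. (norm (z - xs))\<^sup>2"]
        sum_lessThan_fun_upd[OF i, of "\<lambda>j z. (norm (z - G j xs))\<^sup>2"]
      by (simp add: e_def v_def)
  qed
  have "(1 / N) * (\<Sum>i<n. finito_lyapunov c d n \<alpha> G xs (finito_step n \<alpha> G (x, y) i))
      = c * (X - X / N + (norm e)\<^sup>2) + d * (Y - Y / N + P) + (1 / N) * (\<Sum>i<n. (norm (Q i))\<^sup>2)"
    using N by (simp add: step sum.distrib sum_subtractf sum_distrib_left X_def Y_def P_def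
        N_def field_simps)
  moreover have "(1 / N) * (\<Sum>i<n. (norm (Q i))\<^sup>2)
      \<le> (norm (e - \<alpha> *\<^sub>R \<gamma>))\<^sup>2 + (1 + t) / N * ((1 + s) / N\<^sup>2 * X + (1 + 1 / s) * \<alpha>\<^sup>2 * Y)
        + (1 + 1 / t) * \<alpha>\<^sup>2 * (P - (norm \<gamma>)\<^sup>2)"
  proof -
    have "(1 / N) *\<^sub>R (\<Sum>i<n. x i - xs) - \<alpha> *\<^sub>R (\<Sum>i<n. y i - G i xs) = e"
      unfolding e_def v_def vbar_def sum_subtractf G0 using N
      by (simp add: N_def sum_constant_scaleR scaleR_diff_right)
    moreover have "(1 / N) *\<^sub>R (\<Sum>i<n. G i v - G i xs) = \<gamma>"
      unfolding \<gamma>_def grad_avg_def sum_subtractf G0 N_def by simp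
    ultimately show ?thesis
      using second_moment_update_le[where a = "\<lambda>i. x i - xs" and b = "\<lambda>i. y i - G i xs"
          and g = "\<lambda>i. G i v - G i xs" and \<alpha> = \<alpha>, OF n t s]
      unfolding N_def[symmetric] Q_def X_def Y_def P_def by simp
  qed
  moreover have "(norm (e - \<alpha> *\<^sub>R \<gamma>))\<^sup>2 = (norm e)\<^sup>2 - 2 * \<alpha> * inner e \<gamma> + \<alpha>\<^sup>2 * (norm \<gamma>)\<^sup>2"
    unfolding power2_norm_eq_inner by (simp add: inner_diff inner_commute power2_eq_square)
  ultimately have "(1 / N) * (\<Sum>i<n. finito_lyapunov c d n \<alpha> G xs (finito_step n \<alpha> G (x, y) i))
      \<le> c * (X - X / N + (norm e)\<^sup>2) + d * (Y - Y / N + P)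
        + ((norm e)\<^sup>2 - 2 * \<alpha> * inner e \<gamma> + \<alpha>\<^sup>2 * (norm \<gamma>)\<^sup>2
        + (1 + t) / N * ((1 + s) / N\<^sup>2 * X + (1 + 1 / s) * \<alpha>\<^sup>2 * Y)
        + (1 + 1 / t) * \<alpha>\<^sup>2 * (P - (norm \<gamma>)\<^sup>2))"
    by linarith
  also have "\<dots> = (c * (1 - 1 / N) + (1 + t) * (1 + s) / N ^ 3) * X
      + (d * (1 - 1 / N) + (1 + t) * (1 + 1 / s) * \<alpha>\<^sup>2 / N) * Y
      + ((1 + c) * (norm e)\<^sup>2 - 2 * \<alpha> * inner e \<gamma> + (d + (1 + 1 / t) * \<alpha>\<^sup>2) * P
         - \<alpha>\<^sup>2 / t * (norm \<gamma>)\<^sup>2)"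
    using N t by (simp add: field_simps power2_eq_square power3_eq_cube)
  finally show ?thesis unfolding e_def \<gamma>_def P_def .
qed

lemma finito_E_le_lyapunov_bound:
  fixes G :: "nat \<Rightarrow> 'a \<Rightarrow> 'a::euclidean_space"
  assumes n: "0 < n" and G0: "(\<Sum>i<n. G i xs) = 0" and t: "0 < t" and s: "0 < s"
    and \<rho>: "0 \<le> \<rho>" and d: "0 \<le> d"
    and coeff_x: "c * (1 - 1 / real n) + (1 + t) * (1 + s) / real n ^ 3 \<le> \<rho> * c"
    and coeff_y: "d * (1 - 1 / real n) + (1 + t) * (1 + 1 / s) * \<alpha>\<^sup>2 / real n \<le> \<rho> * d"
    and residual: "\<And>v. (1 + c) * (norm (v - xs))\<^sup>2 - 2 * \<alpha> * inner (v - xs) (grad_avg n G v)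
        + (d + (1 + 1 / t) * \<alpha>\<^sup>2) * ((1 / real n) * (\<Sum>i<n. (norm (G i v - G i xs))\<^sup>2))
        - \<alpha>\<^sup>2 / t * (norm (grad_avg n G v))\<^sup>2 \<le> \<rho> * (norm (v - xs))\<^sup>2"
  shows "finito_E n \<alpha> G x0 y0 k
      (\<lambda>st. c * (\<Sum>i<n. (norm (fst st i - xs))\<^sup>2) + (norm (vbar n \<alpha> st - xs))\<^sup>2)
    \<le> \<rho> ^ k * (c * (\<Sum>i<n. (norm (x0 i - xs))\<^sup>2) + d * (\<Sum>i<n. (norm (y0 i - G i xs))\<^sup>2)
      + (norm (vbar n \<alpha> (x0, y0) - xs))\<^sup>2)"
proof -
  let ?V = "finito_lyapunov c d n \<alpha> G xs"
  have contraction: "\<forall>st. (1 / real n) * (\<Sum>i<n. ?V (finito_step n \<alpha> G st i)) \<le> \<rho> * ?V st"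
  proof
    fix st :: "(nat \<Rightarrow> 'a) \<times> (nat \<Rightarrow> 'a)"
    obtain x y where st: "st = (x, y)" by fastforce
    define X where "X = (\<Sum>j<n. (norm (x j - xs))\<^sup>2)"
    define Y where "Y = (\<Sum>j<n. (norm (y j - G j xs))\<^sup>2)"
    have "0 \<le> X" "0 \<le> Y" unfolding X_def Y_def by (simp_all add: sum_nonneg)
    then have "(c * (1 - 1 / real n) + (1 + t) * (1 + s) / real n ^ 3) * X \<le> \<rho> * c * X"
      and "(d * (1 - 1 / real n) + (1 + t) * (1 + 1 / s) * \<alpha>\<^sup>2 / real n) * Y \<le> \<rho> * d * Y"
      using coeff_x coeff_y by (simp_all add: mult_right_mono)
    moreover note finito_lyapunov_avg_step_le[where G = G and xs = xs and \<alpha> = \<alpha> and x = x and y = y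
        and c = c and d = d, OF n G0 t s, folded X_def Y_def]
    moreover have "\<rho> * ?V st = \<rho> * c * X + \<rho> * d * Y + \<rho> * (norm (vbar n \<alpha> (x, y) - xs))\<^sup>2"
      unfolding st finito_lyapunov_def X_def Y_def by (simp add: algebra_simps)
    ultimately show "(1 / real n) * (\<Sum>i<n. ?V (finito_step n \<alpha> G st i)) \<le> \<rho> * ?V st"
      using residual[of "vbar n \<alpha> (x, y)"] unfolding st by linarith
  qed
  have Phi_le: "\<forall>st. c * (\<Sum>i<n. (norm (fst st i - xs))\<^sup>2) + (norm (vbar n \<alpha> st - xs))\<^sup>2 \<le> ?V st"
    unfolding finito_lyapunov_def using d by (simp add: sum_nonneg)
  from finito_E_le_geometric[OF \<rho> Phi_le contraction] show ?thesis
    unfolding finito_lyapunov_def by simp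
qed

section \<open>The three regimes\<close>

lemma in_S_inequality_at_root:
  assumes S: "in_S m L g G" and m: "0 < m" "m \<le> L" and root: "G z = 0"
  shows "m * L * (norm (x - z))\<^sup>2 + (norm (G x))\<^sup>2 \<le> (L + m) * inner (x - z) (G x)"
proof -
  obtain xs where ineq: "\<And>x. - 2 * m * L * (norm (x - xs))\<^sup>2 + 2 * (L + m) * inner (x - xs) (G x)
      - 2 * (norm (G x))\<^sup>2 \<ge> 0"
    using S unfolding in_S_def by blast
  have "m * L * (norm (z - xs))\<^sup>2 \<le> 0" using ineq[of z] root by (simp add: mult_ac)
  moreover have "0 < m * L" using m by simp
  ultimately have "(norm (z - xs))\<^sup>2 \<le> 0"
    using mult_le_cancel_left_pos[of "m * L" "(norm (z - xs))\<^sup>2" 0] by simp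
  then have "z = xs" by simp
  then show ?thesis using ineq[of x] by (simp add: algebra_simps)
qed

lemma in_S_gradient_nonzero:
  fixes G :: "'a::euclidean_space \<Rightarrow> 'a"
  assumes S: "in_S m L g G" and "0 < m" "0 < L"
  shows "\<exists>x. G x \<noteq> 0"
proof -
  obtain xs where ineq: "\<And>x. - 2 * m * L * (norm (x - xs))\<^sup>2 + 2 * (L + m) * inner (x - xs) (G x)
      - 2 * (norm (G x))\<^sup>2 \<ge> 0"
    using S unfolding in_S_def by blast
  obtain b :: 'a where b: "b \<in> Basis" using nonempty_Basis by blast
  have "0 < m * L" using assms by simp
  then have "G (xs + b) \<noteq> 0" using ineq[of "xs + b"] b by (auto simp: mult.commute)
  then show ?thesis by blast
qed

text \<open>Multiplying the hypothesis by \<open>\<parallel>u\<parallel>\<^sup>2\<close> and using Cauchy-Schwarz gives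
  \<open>(\<langle>u, g\<rangle> - m \<parallel>u\<parallel>\<^sup>2) (\<langle>u, g\<rangle> - L \<parallel>u\<parallel>\<^sup>2) \<le> 0\<close>.\<close>
lemma S_inequality_imp_strongly_monotone:
  fixes u g :: "'a::real_inner"
  assumes m: "0 < m" "m \<le> L" and S: "m * L * (norm u)\<^sup>2 + (norm g)\<^sup>2 \<le> (L + m) * inner u g"
  shows "m * (norm u)\<^sup>2 \<le> inner u g"
proof (rule ccontr)
  let ?E = "(norm u)\<^sup>2" and ?I = "inner u g"
  assume "\<not> m * ?E \<le> ?I"
  moreover have "m * ?E \<le> L * ?E" using m by (intro mult_right_mono) auto
  ultimately have "0 < (?I - m * ?E) * (?I - L * ?E)" by (simp add: mult_neg_neg)
  moreover have "?E * (m * L * ?E + (norm g)\<^sup>2) \<le> ?E * ((L + m) * ?I)"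
    using S by (intro mult_left_mono) auto
  then have "(?I - m * ?E) * (?I - L * ?E) \<le> ?I\<^sup>2 - ?E * (norm g)\<^sup>2"
    by (simp add: algebra_simps power2_eq_square)
  moreover have "?I\<^sup>2 \<le> ?E * (norm g)\<^sup>2"
    by (metis Cauchy_Schwarz_ineq power2_norm_eq_inner)
  ultimately show False by linarith
qed

lemma in_F_avg_interpolation:
  fixes G :: "nat \<Rightarrow> 'a \<Rightarrow> 'a::euclidean_space"
  assumes n: "0 < n" and F: "\<forall>i<n. in_F m L (f i) (G i)" and m: "0 \<le> m" "m \<le> L"
    and G0: "(\<Sum>i<n. G i xs) = 0"
  shows "(1 / real n) * (\<Sum>i<n. (norm (G i v - G i xs))\<^sup>2)
    \<le> (L + m) * inner (v - xs) (grad_avg n G v) - m * L * (norm (v - xs))\<^sup>2"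
proof -
  have "(\<Sum>i<n. (norm (G i v - G i xs))\<^sup>2)
      \<le> (\<Sum>i<n. (L + m) * inner (G i v - G i xs) (v - xs) - m * L * (norm (v - xs))\<^sup>2)"
    using F m by (intro sum_mono in_F_interpolation) auto
  also have "\<dots> = (L + m) * inner (\<Sum>i<n. G i v) (v - xs) - real n * (m * L * (norm (v - xs))\<^sup>2)"
    by (simp add: sum_subtractf G0 sum_distrib_left[symmetric] inner_sum_left[symmetric])
  also have "(\<Sum>i<n. G i v) = real n *\<^sub>R grad_avg n G v"
    using n by (simp add: grad_avg_def)
  finally show ?thesis using n by (simp add: field_simps inner_commute)
qed

text \<open>The unsimplified constants in the residual lemmas below are those of
  \<open>finito_lyapunov_avg_step_le\<close> instantiated with the stepsize, weights and Young parameter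
  of the regime, so that they match \<open>finito_E_le_lyapunov_bound\<close> syntactically.\<close>
lemma finito_residual_strongly_convex:
  fixes G :: "nat \<Rightarrow> 'a \<Rightarrow> 'a::euclidean_space"
  assumes n: "0 < n" and G0: "(\<Sum>i<n. G i xs) = 0" and m: "0 < m" "m \<le> L"
    and F: "\<forall>i<n. in_F m L (f i) (G i)"
  shows "(1 + m / (10 * L)) * (norm (v - xs))\<^sup>2 - 2 * (1 / (5 * L)) * inner (v - xs) (grad_avg n G v)
      + (1 / (5 * L\<^sup>2) + (1 + 1 / (1 / 4)) * (1 / (5 * L))\<^sup>2)
        * ((1 / real n) * (\<Sum>i<n. (norm (G i v - G i xs))\<^sup>2))
      - (1 / (5 * L))\<^sup>2 / (1 / 4) * (norm (grad_avg n G v))\<^sup>2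
    \<le> (1 - m / (20 * L)) * (norm (v - xs))\<^sup>2"
proof -
  have L: "0 < L" using m by simp
  define E where "E = (norm (v - xs))\<^sup>2"
  define I where "I = inner (v - xs) (grad_avg n G v)"
  define q where "q = (norm (grad_avg n G v))\<^sup>2"
  define P where "P = (1 / real n) * (\<Sum>i<n. (norm (G i v - G i xs))\<^sup>2)"
  have P: "P \<le> (L + m) * I - m * L * E"
    unfolding P_def I_def E_def using in_F_avg_interpolation[OF n F _ _ G0] m by simp
  have CS: "I\<^sup>2 \<le> E * q"
    unfolding I_def E_def q_def by (metis Cauchy_Schwarz_ineq power2_norm_eq_inner)
  have key: "40 * m * I - 16 * q \<le> 25 * m * L * E"
  proof (cases "E = 0")
    case True
    then show ?thesis using CS unfolding q_def by simp
  next
    case False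
    then have "0 < E" unfolding E_def by simp
    \<comment> \<open>after multiplying by \<open>E\<close> and using \<open>I\<^sup>2 \<le> E q\<close>, complete the square\<close>
    moreover have "0 \<le> (4 * I - 5 * m * E)\<^sup>2 + 25 * m * (L - m) * E\<^sup>2" using m by simp
    then have "E * (40 * m * I - 16 * q) \<le> E * (25 * m * L * E)"
      using CS by (simp add: algebra_simps power2_eq_square)
    ultimately show ?thesis by simp
  qed
  have "(1 + m / (10 * L)) * E - 2 * (1 / (5 * L)) * I
      + (1 / (5 * L\<^sup>2) + (1 + 1 / (1 / 4)) * (1 / (5 * L))\<^sup>2) * P - (1 / (5 * L))\<^sup>2 / (1 / 4) * q
    = (1 + m / (10 * L)) * E - 2 / (5 * L) * I + 2 / (5 * L\<^sup>2) * P - 4 / (25 * L\<^sup>2) * q"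
    using L by (simp add: field_simps power2_eq_square)
  also have "\<dots> \<le> (1 + m / (10 * L)) * E - 2 / (5 * L) * I
      + 2 / (5 * L\<^sup>2) * ((L + m) * I - m * L * E) - 4 / (25 * L\<^sup>2) * q"
    using mult_left_mono[OF P, of "2 / (5 * L\<^sup>2)"] L by simp
  also have "\<dots> = (1 - m / (20 * L)) * E + (40 * m * I - 16 * q - 25 * m * L * E) / (100 * L\<^sup>2)"
    using L by (simp add: field_simps power2_eq_square)
  also have "\<dots> \<le> (1 - m / (20 * L)) * E"
    using divide_nonpos_pos[of "40 * m * I - 16 * q - 25 * m * L * E" "100 * L\<^sup>2"] key L by simp
  finally show ?thesis unfolding E_def I_def q_def P_def .
qed

lemma finito_rate_strongly_convex:
  fixes G :: "nat \<Rightarrow> 'a \<Rightarrow> 'a::euclidean_space"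
  assumes n: "0 < n" and G0: "(\<Sum>i<n. G i xs) = 0" and m: "0 < m" "m \<le> L"
    and F: "\<forall>i<n. in_F m L (f i) (G i)" and N: "sqrt (50 * L / m) \<le> real n"
  shows "finito_E n (1 / (5 * L)) G x0 y0 k
      (\<lambda>st. m / (10 * L) * (\<Sum>i<n. (norm (fst st i - xs))\<^sup>2) + (norm (vbar n (1 / (5 * L)) st - xs))\<^sup>2)
    \<le> (1 - min (1 / (2 * real n)) (m / (20 * L))) ^ k *
      (m / (10 * L) * (\<Sum>i<n. (norm (x0 i - xs))\<^sup>2) + 1 / (5 * L\<^sup>2) * (\<Sum>i<n. (norm (y0 i - G i xs))\<^sup>2)
       + (norm (vbar n (1 / (5 * L)) (x0, y0) - xs))\<^sup>2)"
proof (rule finito_E_le_lyapunov_bound[where G = G and xs = xs and t = "1 / 4" and s = 1, OF n G0])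
  let ?N = "real n" and ?\<rho> = "1 - min (1 / (2 * real n)) (m / (20 * L))"
  have L: "0 < L" and Npos: "0 < ?N" using m n by auto
  have "50 * L / m \<le> ?N\<^sup>2" using N real_sqrt_le_iff by fastforce
  then have mN: "50 * L \<le> m * ?N\<^sup>2" using m by (simp add: field_simps)
  have \<rho>: "1 - 1 / (2 * ?N) \<le> ?\<rho>" "1 - m / (20 * L) \<le> ?\<rho>" by auto
  have "1 / (2 * ?N) \<le> 1" using n by (simp add: field_simps)
  then show "0 \<le> ?\<rho>" using \<rho>(1) by linarith
  have "m / (10 * L) * (1 - 1 / ?N) + (1 + 1 / 4) * (1 + 1) / ?N ^ 3
      = (1 - 1 / (2 * ?N)) * (m / (10 * L)) - (m * ?N\<^sup>2 - 50 * L) / (20 * L * ?N ^ 3)"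
    using L Npos by (simp add: field_simps power2_eq_square power3_eq_cube)
  also have "\<dots> \<le> (1 - 1 / (2 * ?N)) * (m / (10 * L))"
    using mN L Npos by simp
  also have "\<dots> \<le> ?\<rho> * (m / (10 * L))"
    using \<rho>(1) m L by (intro mult_right_mono) auto
  finally show "m / (10 * L) * (1 - 1 / ?N) + (1 + 1 / 4) * (1 + 1) / ?N ^ 3 \<le> ?\<rho> * (m / (10 * L))" .
  have "1 / (5 * L\<^sup>2) * (1 - 1 / ?N) + (1 + 1 / 4) * (1 + 1 / 1) * (1 / (5 * L))\<^sup>2 / ?N
      = (1 - 1 / (2 * ?N)) * (1 / (5 * L\<^sup>2))"
    using L Npos by (simp add: field_simps power2_eq_square)
  then show "1 / (5 * L\<^sup>2) * (1 - 1 / ?N) + (1 + 1 / 4) * (1 + 1 / 1) * (1 / (5 * L))\<^sup>2 / ?N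
      \<le> ?\<rho> * (1 / (5 * L\<^sup>2))"
    using mult_right_mono[OF \<rho>(1), of "1 / (5 * L\<^sup>2)"] by simp
  fix v
  show "(1 + m / (10 * L)) * (norm (v - xs))\<^sup>2 - 2 * (1 / (5 * L)) * inner (v - xs) (grad_avg n G v)
      + (1 / (5 * L\<^sup>2) + (1 + 1 / (1 / 4)) * (1 / (5 * L))\<^sup>2)
        * ((1 / ?N) * (\<Sum>i<n. (norm (G i v - G i xs))\<^sup>2))
      - (1 / (5 * L))\<^sup>2 / (1 / 4) * (norm (grad_avg n G v))\<^sup>2
    \<le> ?\<rho> * (norm (v - xs))\<^sup>2"
    using order_trans[OF finito_residual_strongly_convex[OF n G0 m F, of v]
        mult_right_mono[OF \<rho>(2) zero_le_power2]] .
qed simp_all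

lemma finito_residual_convex:
  fixes G :: "nat \<Rightarrow> 'a \<Rightarrow> 'a::euclidean_space"
  assumes n: "0 < n" and G0: "(\<Sum>i<n. G i xs) = 0" and m: "0 < m" "m \<le> L"
    and F: "\<forall>i<n. in_F 0 L (f i) (G i)"
    and mono: "m * (norm (v - xs))\<^sup>2 \<le> inner (v - xs) (grad_avg n G v)"
  shows "(1 + m / (16 * L)) * (norm (v - xs))\<^sup>2 - 2 * (1 / (8 * L)) * inner (v - xs) (grad_avg n G v)
      + (1 / (16 * L\<^sup>2) + (1 + 1 / (1 / 3)) * (1 / (8 * L))\<^sup>2)
        * ((1 / real n) * (\<Sum>i<n. (norm (G i v - G i xs))\<^sup>2))
      - (1 / (8 * L))\<^sup>2 / (1 / 3) * (norm (grad_avg n G v))\<^sup>2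
    \<le> (1 - m / (16 * L)) * (norm (v - xs))\<^sup>2"
proof -
  have L: "0 < L" using m by simp
  define E where "E = (norm (v - xs))\<^sup>2"
  define I where "I = inner (v - xs) (grad_avg n G v)"
  define q where "q = (norm (grad_avg n G v))\<^sup>2"
  define P where "P = (1 / real n) * (\<Sum>i<n. (norm (G i v - G i xs))\<^sup>2)"
  have P: "P \<le> L * I"
    unfolding P_def I_def using in_F_avg_interpolation[OF n F _ _ G0] L by simp
  have "(1 + m / (16 * L)) * E - 2 * (1 / (8 * L)) * I
      + (1 / (16 * L\<^sup>2) + (1 + 1 / (1 / 3)) * (1 / (8 * L))\<^sup>2) * P - (1 / (8 * L))\<^sup>2 / (1 / 3) * q
    = (1 + m / (16 * L)) * E - I / (4 * L) + P / (8 * L\<^sup>2) - 3 * q / (64 * L\<^sup>2)"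
    using L by (simp add: field_simps power2_eq_square)
  also have "\<dots> \<le> (1 + m / (16 * L)) * E - I / (8 * L)"
  proof -
    have "P / (8 * L\<^sup>2) \<le> L * I / (8 * L\<^sup>2)" using P L by (simp add: divide_right_mono)
    moreover have "L * I / (8 * L\<^sup>2) = I / (8 * L)" using L by (simp add: power2_eq_square)
    moreover have "0 \<le> 3 * q / (64 * L\<^sup>2)" unfolding q_def by simp
    ultimately show ?thesis by (simp add: field_simps)
  qed
  also have "\<dots> \<le> (1 + m / (16 * L)) * E - m * E / (8 * L)"
    using mono L unfolding E_def I_def by (simp add: divide_right_mono)
  also have "\<dots> = (1 - m / (16 * L)) * E" using L by (simp add: field_simps)
  finally show ?thesis unfolding E_def I_def q_def P_def .
qed

lemma finito_rate_convex:
  fixes G :: "nat \<Rightarrow> 'a \<Rightarrow> 'a::euclidean_space"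
  assumes n: "0 < n" and G0: "(\<Sum>i<n. G i xs) = 0" and m: "0 < m" "m \<le> L"
    and F: "\<forall>i<n. in_F 0 L (f i) (G i)" and N: "sqrt (64 * L / m) \<le> real n"
    and mono: "\<And>v. m * (norm (v - xs))\<^sup>2 \<le> inner (v - xs) (grad_avg n G v)"
  shows "finito_E n (1 / (8 * L)) G x0 y0 k
      (\<lambda>st. m / (16 * L) * (\<Sum>i<n. (norm (fst st i - xs))\<^sup>2) + (norm (vbar n (1 / (8 * L)) st - xs))\<^sup>2)
    \<le> (1 - min (1 / (3 * real n)) (5 * m / (176 * L))) ^ k *
      (m / (16 * L) * (\<Sum>i<n. (norm (x0 i - xs))\<^sup>2) + 1 / (16 * L\<^sup>2) * (\<Sum>i<n. (norm (y0 i - G i xs))\<^sup>2)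
       + (norm (vbar n (1 / (8 * L)) (x0, y0) - xs))\<^sup>2)"
proof (rule finito_E_le_lyapunov_bound[where G = G and xs = xs and t = "1 / 3" and s = 1, OF n G0])
  let ?N = "real n" and ?\<rho> = "1 - min (1 / (3 * real n)) (5 * m / (176 * L))"
  have L: "0 < L" and Npos: "0 < ?N" using m n by auto
  have "64 * L / m \<le> ?N\<^sup>2" using N real_sqrt_le_iff by fastforce
  then have mN: "64 * L \<le> m * ?N\<^sup>2" using m by (simp add: field_simps)
  have \<rho>: "1 - 1 / (3 * ?N) \<le> ?\<rho>" "1 - 5 * m / (176 * L) \<le> ?\<rho>" by auto
  have "1 / (3 * ?N) \<le> 1" using n by (simp add: field_simps)
  then show "0 \<le> ?\<rho>" using \<rho>(1) by linarith
  have "m / (16 * L) * (1 - 1 / ?N) + (1 + 1 / 3) * (1 + 1) / ?N ^ 3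
      = (1 - 1 / (3 * ?N)) * (m / (16 * L)) - (m * ?N\<^sup>2 - 64 * L) / (24 * L * ?N ^ 3)"
    using L Npos by (simp add: field_simps power2_eq_square power3_eq_cube)
  also have "\<dots> \<le> (1 - 1 / (3 * ?N)) * (m / (16 * L))"
    using mN L Npos by simp
  also have "\<dots> \<le> ?\<rho> * (m / (16 * L))"
    using \<rho>(1) m L by (intro mult_right_mono) auto
  finally show "m / (16 * L) * (1 - 1 / ?N) + (1 + 1 / 3) * (1 + 1) / ?N ^ 3 \<le> ?\<rho> * (m / (16 * L))" .
  have "1 / (16 * L\<^sup>2) * (1 - 1 / ?N) + (1 + 1 / 3) * (1 + 1 / 1) * (1 / (8 * L))\<^sup>2 / ?N
      = (1 - 1 / (3 * ?N)) * (1 / (16 * L\<^sup>2))"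
    using L Npos by (simp add: field_simps power2_eq_square)
  then show "1 / (16 * L\<^sup>2) * (1 - 1 / ?N) + (1 + 1 / 3) * (1 + 1 / 1) * (1 / (8 * L))\<^sup>2 / ?N
      \<le> ?\<rho> * (1 / (16 * L\<^sup>2))"
    using mult_right_mono[OF \<rho>(1), of "1 / (16 * L\<^sup>2)"] by simp
  have "1 - m / (16 * L) \<le> ?\<rho>" using \<rho>(2) m L by (simp add: field_simps)
  then show "(1 + m / (16 * L)) * (norm (v - xs))\<^sup>2 - 2 * (1 / (8 * L)) * inner (v - xs) (grad_avg n G v)
      + (1 / (16 * L\<^sup>2) + (1 + 1 / (1 / 3)) * (1 / (8 * L))\<^sup>2)
        * ((1 / ?N) * (\<Sum>i<n. (norm (G i v - G i xs))\<^sup>2))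
      - (1 / (8 * L))\<^sup>2 / (1 / 3) * (norm (grad_avg n G v))\<^sup>2
    \<le> ?\<rho> * (norm (v - xs))\<^sup>2" for v
    using order_trans[OF finito_residual_convex[OF n G0 m F mono[of v]]
        mult_right_mono[of _ ?\<rho>, OF _ zero_le_power2]] by blast
qed simp_all

lemma finito_residual_smooth:
  fixes G :: "nat \<Rightarrow> 'a \<Rightarrow> 'a::euclidean_space"
  assumes n: "0 < n" and m: "0 < m" "m \<le> L"
    and F: "\<forall>i<n. L_smooth L (f i) (G i)" and N: "48 * L\<^sup>2 / m\<^sup>2 \<le> real n"
    and mono: "m * (norm (v - xs))\<^sup>2 \<le> inner (v - xs) (grad_avg n G v)"
  shows "(1 + 3 / (8 * real n)) * (norm (v - xs))\<^sup>2
      - 2 * (1 / (2 * real n * m)) * inner (v - xs) (grad_avg n G v)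
      + (1 / (real n ^ 2 * m\<^sup>2) + (1 + 1 / 1) * (1 / (2 * real n * m))\<^sup>2)
        * ((1 / real n) * (\<Sum>i<n. (norm (G i v - G i xs))\<^sup>2))
      - (1 / (2 * real n * m))\<^sup>2 / 1 * (norm (grad_avg n G v))\<^sup>2
    \<le> (1 - 1 / (3 * real n)) * (norm (v - xs))\<^sup>2"
proof -
  let ?N = "real n"
  have L: "0 < L" and Npos: "0 < ?N" using m n by auto
  define E where "E = (norm (v - xs))\<^sup>2"
  define I where "I = inner (v - xs) (grad_avg n G v)"
  define P where "P = (1 / ?N) * (\<Sum>i<n. (norm (G i v - G i xs))\<^sup>2)"
  have E: "0 \<le> E" unfolding E_def by simp
  have "(\<Sum>i<n. (norm (G i v - G i xs))\<^sup>2) \<le> (\<Sum>i<n. L\<^sup>2 * E)"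
  proof (rule sum_mono)
    fix i assume "i \<in> {..<n}"
    then have "norm (G i v - G i xs) \<le> L * norm (v - xs)" using F unfolding L_smooth_def by blast
    then show "(norm (G i v - G i xs))\<^sup>2 \<le> L\<^sup>2 * E"
      unfolding E_def by (metis norm_ge_zero power_mono power_mult_distrib)
  qed
  then have "P \<le> L\<^sup>2 * E" unfolding P_def using Npos by (simp add: pos_divide_le_eq mult_ac)
  moreover have "L\<^sup>2 \<le> ?N * m\<^sup>2 / 48" using N m by (simp add: pos_divide_le_eq)
  ultimately have "P \<le> ?N * m\<^sup>2 / 48 * E" using E by (meson mult_right_mono order_trans)
  then have "3 / (2 * ?N\<^sup>2 * m\<^sup>2) * P \<le> 3 / (2 * ?N\<^sup>2 * m\<^sup>2) * (?N * m\<^sup>2 / 48 * E)"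
    by (rule mult_left_mono) simp
  also have "\<dots> = E / (32 * ?N)" using Npos m by (simp add: power2_eq_square)
  finally have P: "3 / (2 * ?N\<^sup>2 * m\<^sup>2) * P \<le> E / (32 * ?N)" .
  have coefficient: "1 / (?N ^ 2 * m\<^sup>2) + (1 + 1 / 1) * (1 / (2 * ?N * m))\<^sup>2 = 3 / (2 * ?N\<^sup>2 * m\<^sup>2)"
    using Npos m by (simp add: field_simps power2_eq_square)
  have I: "E / ?N \<le> 2 * (1 / (2 * ?N * m)) * I"
    using mono Npos m unfolding E_def I_def by (simp add: field_simps)
  have "(1 + 3 / (8 * ?N)) * E - E / ?N + E / (32 * ?N) = (1 - 1 / (3 * ?N)) * E - 25 * E / (96 * ?N)"
    using Npos by (simp add: field_simps)
  also have "\<dots> \<le> (1 - 1 / (3 * ?N)) * E" using E Npos by simp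
  finally have "(1 + 3 / (8 * ?N)) * E - E / ?N + E / (32 * ?N) \<le> (1 - 1 / (3 * ?N)) * E" .
  moreover have "0 \<le> (1 / (2 * ?N * m))\<^sup>2 / 1 * (norm (grad_avg n G v))\<^sup>2" by simp
  ultimately show ?thesis
    using P I unfolding coefficient E_def[symmetric] I_def[symmetric] P_def[symmetric] by argo
qed

lemma finito_rate_smooth:
  fixes G :: "nat \<Rightarrow> 'a \<Rightarrow> 'a::euclidean_space"
  assumes n: "0 < n" and G0: "(\<Sum>i<n. G i xs) = 0" and m: "0 < m" "m \<le> L"
    and F: "\<forall>i<n. L_smooth L (f i) (G i)" and N: "48 * L\<^sup>2 / m\<^sup>2 \<le> real n"
    and mono: "\<And>v. m * (norm (v - xs))\<^sup>2 \<le> inner (v - xs) (grad_avg n G v)"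
  shows "finito_E n (1 / (2 * real n * m)) G x0 y0 k
      (\<lambda>st. 3 / (8 * real n) * (\<Sum>i<n. (norm (fst st i - xs))\<^sup>2)
        + (norm (vbar n (1 / (2 * real n * m)) st - xs))\<^sup>2)
    \<le> (1 - 1 / (3 * real n)) ^ k *
      (3 / (8 * real n) * (\<Sum>i<n. (norm (x0 i - xs))\<^sup>2)
       + 1 / (real n ^ 2 * m\<^sup>2) * (\<Sum>i<n. (norm (y0 i - G i xs))\<^sup>2)
       + (norm (vbar n (1 / (2 * real n * m)) (x0, y0) - xs))\<^sup>2)"
proof (rule finito_E_le_lyapunov_bound[where G = G and xs = xs and t = 1 and s = 3, OF n G0])
  let ?N = "real n"
  have Npos: "0 < ?N" using n by simp
  have "m\<^sup>2 \<le> L\<^sup>2" using m by (intro power_mono) auto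
  then have "48 \<le> 48 * L\<^sup>2 / m\<^sup>2" using m by (simp add: pos_le_divide_eq)
  then have N48: "48 \<le> ?N" using N by linarith
  have "1 / (3 * ?N) \<le> 1" using n by (simp add: field_simps)
  then show "0 \<le> 1 - 1 / (3 * ?N)" by linarith
  have "3 / (8 * ?N) * (1 - 1 / ?N) + (1 + 1) * (1 + 3) / ?N ^ 3
      = (1 - 1 / (3 * ?N)) * (3 / (8 * ?N)) - (?N - 32) / (4 * ?N ^ 3)"
    using Npos by (simp add: field_simps power3_eq_cube)
  also have "\<dots> \<le> (1 - 1 / (3 * ?N)) * (3 / (8 * ?N))" using N48 by simp
  finally show "3 / (8 * ?N) * (1 - 1 / ?N) + (1 + 1) * (1 + 3) / ?N ^ 3
      \<le> (1 - 1 / (3 * ?N)) * (3 / (8 * ?N))" .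
  show "1 / (?N ^ 2 * m\<^sup>2) * (1 - 1 / ?N) + (1 + 1) * (1 + 1 / 3) * (1 / (2 * ?N * m))\<^sup>2 / ?N
      \<le> (1 - 1 / (3 * ?N)) * (1 / (?N ^ 2 * m\<^sup>2))"
    using Npos m by (simp add: field_simps power2_eq_square)
  show "(1 + 3 / (8 * ?N)) * (norm (v - xs))\<^sup>2
      - 2 * (1 / (2 * ?N * m)) * inner (v - xs) (grad_avg n G v)
      + (1 / (?N ^ 2 * m\<^sup>2) + (1 + 1 / 1) * (1 / (2 * ?N * m))\<^sup>2)
        * ((1 / ?N) * (\<Sum>i<n. (norm (G i v - G i xs))\<^sup>2))
      - (1 / (2 * ?N * m))\<^sup>2 / 1 * (norm (grad_avg n G v))\<^sup>2
    \<le> (1 - 1 / (3 * ?N)) * (norm (v - xs))\<^sup>2" for v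
    by (rule finito_residual_smooth[OF n m F N mono])
qed simp_all

theorem corollary2:
  fixes f :: "nat \<Rightarrow> 'a::euclidean_space \<Rightarrow> real"
    and G :: "nat \<Rightarrow> 'a \<Rightarrow> 'a"
    and n :: nat and m L :: real and xs :: 'a
    and x0 y0 :: "nat \<Rightarrow> 'a"
  assumes m_pos: "0 < m" and mL: "m \<le> L"
    and C1: "\<forall>i<n. C1_grad (f i) (G i)"
    and S: "in_S m L (\<lambda>x. (1 / real n) * (\<Sum>i<n. f i x)) (\<lambda>x. (1 / real n) *\<^sub>R (\<Sum>i<n. G i x))"
    and xs: "(1 / real n) *\<^sub>R (\<Sum>i<n. G i xs) = 0"
  shows
   "((\<forall>i<n. in_F m L (f i) (G i)) \<and> real n \<ge> sqrt (50 * L / m) \<longrightarrow>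
      (\<forall>k. finito_E n (1 / (5 * L)) G x0 y0 k
              (\<lambda>st. m / (10 * L) * (\<Sum>i<n. (norm (fst st i - xs))\<^sup>2)
                    + (norm (vbar n (1 / (5 * L)) st - xs))\<^sup>2)
          \<le> (1 - min (1 / (2 * real n)) (m / (20 * L))) ^ k *
             (m / (10 * L) * (\<Sum>i<n. (norm (x0 i - xs))\<^sup>2)
              + 1 / (5 * L\<^sup>2) * (\<Sum>i<n. (norm (y0 i - G i xs))\<^sup>2)
              + (norm (vbar n (1 / (5 * L)) (x0, y0) - xs))\<^sup>2)))
  \<and> ((\<forall>i<n. in_F 0 L (f i) (G i)) \<and> real n \<ge> sqrt (64 * L / m) \<longrightarrow>
      (\<forall>k. finito_E n (1 / (8 * L)) G x0 y0 k
              (\<lambda>st. m / (16 * L) * (\<Sum>i<n. (norm (fst st i - xs))\<^sup>2)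
                    + (norm (vbar n (1 / (8 * L)) st - xs))\<^sup>2)
          \<le> (1 - min (1 / (3 * real n)) (5 * m / (176 * L))) ^ k *
             (m / (16 * L) * (\<Sum>i<n. (norm (x0 i - xs))\<^sup>2)
              + 1 / (16 * L\<^sup>2) * (\<Sum>i<n. (norm (y0 i - G i xs))\<^sup>2)
              + (norm (vbar n (1 / (8 * L)) (x0, y0) - xs))\<^sup>2)))
  \<and> ((\<forall>i<n. L_smooth L (f i) (G i)) \<and> real n \<ge> 48 * L\<^sup>2 / m\<^sup>2 \<longrightarrow>
      (\<forall>k. finito_E n (1 / (2 * real n * m)) G x0 y0 k
              (\<lambda>st. 3 / (8 * real n) * (\<Sum>i<n. (norm (fst st i - xs))\<^sup>2)
                    + (norm (vbar n (1 / (2 * real n * m)) st - xs))\<^sup>2)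
          \<le> (1 - 1 / (3 * real n)) ^ k *
             (3 / (8 * real n) * (\<Sum>i<n. (norm (x0 i - xs))\<^sup>2)
              + 1 / (real n ^ 2 * m\<^sup>2) * (\<Sum>i<n. (norm (y0 i - G i xs))\<^sup>2)
              + (norm (vbar n (1 / (2 * real n * m)) (x0, y0) - xs))\<^sup>2)))"
proof -
  have L: "0 < L" using m_pos mL by simp
  have S': "in_S m L (\<lambda>x. (1 / real n) * (\<Sum>i<n. f i x)) (grad_avg n G)"
    using S unfolding grad_avg_def[abs_def] .
  have n: "0 < n"
  proof (rule ccontr)
    assume "\<not> 0 < n"
    then have "grad_avg n G = (\<lambda>x. 0)" by (simp add: grad_avg_def fun_eq_iff)
    then show False using in_S_gradient_nonzero[OF S' m_pos L] by simp
  qed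
  have G0: "(\<Sum>i<n. G i xs) = 0" using xs n by simp
  have root: "grad_avg n G xs = 0" using xs unfolding grad_avg_def .
  have mono: "m * (norm (v - xs))\<^sup>2 \<le> inner (v - xs) (grad_avg n G v)" for v
    by (rule S_inequality_imp_strongly_monotone[OF m_pos mL in_S_inequality_at_root[OF S' m_pos mL root]])
  show ?thesis
    using finito_rate_strongly_convex[where G = G and xs = xs, OF n G0 m_pos mL]
      finito_rate_convex[where G = G and xs = xs, OF n G0 m_pos mL _ _ mono]
      finito_rate_smooth[where G = G and xs = xs, OF n G0 m_pos mL _ _ mono]
    by blast
qed

end
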